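(* Let $u:[0,\infty)\to\mathbb{R}\cup\{-\infty\}$ be twice continuously differentiable on $(0,\infty)$ with $u'>0$, $u''<0$ on $(0,\infty)$ and $\lim_{x\downarrow 0}u'(x)=\infty$, and let $(\beta,R,Y)$ be a random vector with strictly positive components and finite support. For $w>0$ let $c(w)$ be the unique solution of $\max_c u(c)+\mathbb{E}[\beta u(R(w-c)+Y)]$ subject to $c>0$ and $R(w-c)+Y\ge 0$ in every state, let $s(w)=w-c(w)$, and let $S=s((0,\infty))$ (an open interval). Define $g:S\to(0,\infty)$ by $$g(s)=(u')^{-1}\big(\mathbb{E}[\beta R\,u'(Rs+Y)]\big).$$ If the consumption function $c$ is concave on $(0,\infty)$, then $g$ is concave on $S$.
   Context: It is known (and may be used) that $c$ and $s$ are continuously differentiable with $c',s'\in(0,1)$, that the Euler equation $u'(c(w))=\mathbb{E}[\beta R u'(Rs(w)+Y)]$ holds, so $g(s(w))=c(w)$ for all $w>0$, and that $g$ is strictly increasing. *)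

theory Defs
  imports "HOL-Analysis.Analysis" "HOL-Probability.Probability"
begin

text \<open>A state of the world is a triple (beta, R, Y) of reals; the random vector
is a pmf on such triples with finite support.\<close>

type_synonym state = "real \<times> real \<times> real"

definition sbeta :: "state \<Rightarrow> real" where "sbeta x = fst x"
definition sR :: "state \<Rightarrow> real" where "sR x = fst (snd x)"
definition sY :: "state \<Rightarrow> real" where "sY x = snd (snd x)"

definition Exp :: "state pmf \<Rightarrow> (state \<Rightarrow> real) \<Rightarrow> real" where
  "Exp p f = (\<Sum>x\<in>set_pmf p. pmf p x * f x)"

definition EExp :: "state pmf \<Rightarrow> (state \<Rightarrow> ereal) \<Rightarrow> ereal" where
  "EExp p f = (\<Sum>x\<in>set_pmf p. ereal (pmf p x) * f x)"

text \<open>Utility on [0,inf) with values in R \<union> {-inf}: real utility ur on (0,inf),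
value u0 at 0.\<close>
definition uext :: "(real \<Rightarrow> real) \<Rightarrow> ereal \<Rightarrow> real \<Rightarrow> ereal" where
  "uext ur u0 x = (if x > 0 then ereal (ur x) else u0)"

definition feasible :: "state pmf \<Rightarrow> real \<Rightarrow> real \<Rightarrow> bool" where
  "feasible p w c \<longleftrightarrow> c > 0 \<and> (\<forall>x\<in>set_pmf p. sR x * (w - c) + sY x \<ge> 0)"

definition objective :: "(real \<Rightarrow> real) \<Rightarrow> ereal \<Rightarrow> state pmf \<Rightarrow> real \<Rightarrow> real \<Rightarrow> ereal" where
  "objective ur u0 p w c =
     ereal (ur c) + EExp p (\<lambda>x. ereal (sbeta x) * uext ur u0 (sR x * (w - c) + sY x))"

definition gfun :: "(real \<Rightarrow> real) \<Rightarrow> state pmf \<Rightarrow> real \<Rightarrow> real" where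
  "gfun u' p s = the_inv_into {0<..} u' (Exp p (\<lambda>x. sbeta x * sR x * u' (sR x * s + sY x)))"

end

theory Submission
  imports Defs
begin

text \<open>Since \<open>g (s w) = c w\<close> for the savings function \<open>s w = w - c w\<close>, the map
  \<open>h \<sigma> = \<sigma> + g \<sigma>\<close> inverts \<open>s\<close>. Concavity of \<open>c\<close> makes \<open>s\<close> convex and \<open>c' < 1\<close> makes it
  strictly increasing; the inverse of a strictly increasing convex function is concave, hence
  so is \<open>g = h - id\<close>.\<close>

lemma strict_mono_on_minus_if_deriv_less_1:
  fixes f f' :: "real \<Rightarrow> real"
  assumes "convex I"
    and "\<And>x. x \<in> I \<Longrightarrow> (f has_real_derivative f' x) (at x)"
    and "\<And>x. x \<in> I \<Longrightarrow> f' x < 1"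
  shows "strict_mono_on I (\<lambda>x. x - f x)"
proof (rule strict_mono_onI)
  fix a b assume "a \<in> I" "b \<in> I" "a < b"
  show "a - f a < b - f b"
  proof (rule DERIV_pos_imp_increasing[OF \<open>a < b\<close>])
    fix x assume "a \<le> x" "x \<le> b"
    with \<open>a \<in> I\<close> \<open>b \<in> I\<close> have "x \<in> I"
      using assms(1) by (metis is_interval_convex_1 mem_is_interval_1_I)
    then show "\<exists>y. ((\<lambda>x. x - f x) has_real_derivative y) (at x) \<and> y > 0"
      using assms(2,3) by (auto intro!: exI[of _ "1 - f' x"] derivative_eq_intros)
  qed
qed

lemma concave_on_inverse_of_convex_strict_mono:
  fixes s h :: "real \<Rightarrow> real"
  assumes s_convex: "convex_on I s"
    and s_mono: "strict_mono_on I s"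
    and image_convex: "convex (s ` I)"
    and inverse: "\<And>w. w \<in> I \<Longrightarrow> h (s w) = w"
  shows "concave_on (s ` I) h"
proof (rule concave_on_linorderI[OF _ image_convex])
  fix t x y :: real
  assume t: "0 < t" "t < 1" and "x \<in> s ` I" "y \<in> s ` I" "x < y"
  then obtain a b where a: "a \<in> I" "x = s a" and b: "b \<in> I" "y = s b"
    by blast
  have "(1 - t) *\<^sub>R x + t *\<^sub>R y \<in> s ` I"
    using \<open>x \<in> s ` I\<close> \<open>y \<in> s ` I\<close> t by (intro convexD[OF image_convex]) auto
  then obtain w where w: "w \<in> I" "s w = (1 - t) *\<^sub>R x + t *\<^sub>R y"
    by (metis imageE)
  have chord_in: "(1 - t) *\<^sub>R a + t *\<^sub>R b \<in> I"
    using a(1) b(1) t by (intro convexD[OF convex_on_imp_convex[OF s_convex]]) auto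
  have "s ((1 - t) *\<^sub>R a + t *\<^sub>R b) \<le> s w"
    using convex_onD[OF s_convex, of t a b] a b t w(2) by simp
  then have "(1 - t) *\<^sub>R a + t *\<^sub>R b \<le> w"
    using strict_mono_on_less_eq[OF s_mono chord_in w(1)] by simp
  moreover have "h ((1 - t) *\<^sub>R x + t *\<^sub>R y) = w"
    using inverse[OF w(1)] by (simp add: w(2))
  ultimately show "(1 - t) * h x + t * h y \<le> h ((1 - t) *\<^sub>R x + t *\<^sub>R y)"
    using inverse a b by simp
qed

theorem lemma2:
  fixes ur u' u'' :: "real \<Rightarrow> real" and u0 :: ereal
    and p :: "state pmf" and c c' :: "real \<Rightarrow> real"
  assumes u0: "u0 \<noteq> \<infinity>"
    and du: "\<And>x. x > 0 \<Longrightarrow> (ur has_real_derivative u' x) (at x)"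
    and ddu: "\<And>x. x > 0 \<Longrightarrow> (u' has_real_derivative u'' x) (at x)"
    and ddu_cont: "continuous_on {0<..} u''"
    and u'_pos: "\<And>x. x > 0 \<Longrightarrow> u' x > 0"
    and u''_neg: "\<And>x. x > 0 \<Longrightarrow> u'' x < 0"
    and inada: "filterlim u' at_top (at_right 0)"
    and fin: "finite (set_pmf p)"
    and pos: "\<And>x. x \<in> set_pmf p \<Longrightarrow> sbeta x > 0 \<and> sR x > 0 \<and> sY x > 0"
    and c_opt: "\<And>w. w > 0 \<Longrightarrow> feasible p w (c w) \<and>
                  (\<forall>d. feasible p w d \<and> d \<noteq> c w \<longrightarrow> objective ur u0 p w d < objective ur u0 p w (c w))"
    \<comment> \<open>known facts from the context\<close>
    and c_deriv: "\<And>w. w > 0 \<Longrightarrow> (c has_real_derivative c' w) (at w)"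
    and c'_cont: "continuous_on {0<..} c'"
    and c'_bounds: "\<And>w. w > 0 \<Longrightarrow> 0 < c' w \<and> c' w < 1"
    and euler: "\<And>w. w > 0 \<Longrightarrow>
                  u' (c w) = Exp p (\<lambda>x. sbeta x * sR x * u' (sR x * (w - c w) + sY x))"
    and g_s: "\<And>w. w > 0 \<Longrightarrow> gfun u' p (w - c w) = c w"
    and g_mono: "strict_mono_on ((\<lambda>w. w - c w) ` {0<..}) (gfun u' p)"
    \<comment> \<open>hypothesis of the lemma\<close>
    and c_concave: "concave_on {0<..} c"
  shows "concave_on ((\<lambda>w. w - c w) ` {0<..}) (gfun u' p)"
proof -
  let ?s = "\<lambda>w. w - c w"
  have "continuous_on {0<..} c"
    using c_deriv by (meson DERIV_isCont continuous_at_imp_continuous_on greaterThan_iff)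
  then have "connected (?s ` {0<..})"
    by (intro connected_continuous_image continuous_intros) auto
  then have image_convex: "convex (?s ` {0<..})"
    by (simp add: connected_convex_1)
  have s_mono: "strict_mono_on {0<..} ?s"
    using c_deriv c'_bounds by (intro strict_mono_on_minus_if_deriv_less_1) auto
  have s_convex: "convex_on {0<..} ?s"
    using c_concave by (intro convex_on_diff) (simp_all add: convex_on_ident)
  have "concave_on (?s ` {0<..}) (\<lambda>\<sigma>. \<sigma> + gfun u' p \<sigma>)"
    using s_convex s_mono image_convex by (rule concave_on_inverse_of_convex_strict_mono) (simp add: g_s)
  then have "concave_on (?s ` {0<..}) (\<lambda>\<sigma>. (\<sigma> + gfun u' p \<sigma>) - \<sigma>)"
    by (rule concave_on_diff) (simp add: convex_on_ident image_convex)
  then show ?thesis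
    by simp
qed

end
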